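(* Let $P^1,\dots,P^4\in\mathbb{R}^n$ be in general position, let $Q^0$ be the equidistant point from $P^1,\dots,P^4$ with barycentric coordinate $\boldsymbol\lambda^0$, and suppose $\lambda^0_1<0$, $\lambda^0_2<0$, $\lambda^0_3\ge0$, $\lambda^0_4\ge0$. Let $Q^{1(1)}=\pi(Q^0|L(P^2,P^3,P^4))$ and $Q^{1(2)}=\pi(Q^0|L(P^1,P^3,P^4))$, with barycentric coordinates $\boldsymbol\lambda^{1(1)},\boldsymbol\lambda^{1(2)}$ about $P^1,\dots,P^4$, and suppose $\lambda^{1(2)}_1<0$. If moreover $\lambda^{1(1)}_2\ge0$, $\lambda^{1(1)}_3\ge0$, $\lambda^{1(1)}_4\ge0$, then the center of the smallest enclosing circle of $P^1,\dots,P^4$ is $Q^\ast=Q^{1(1)}$ and its radius is $d^\ast=d(P^2,Q^{1(1)})$.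
   Context: $d$ is the Euclidean distance. Points are in general position if $P^2-P^1,\dots,P^m-P^1$ are linearly independent. $L(S^1,\dots,S^r)$ is the affine subspace spanned by the points; $\pi(Q'|L)$ is the orthogonal projection onto the affine subspace $L$. The barycentric coordinate of $Q\in L(P^1,\dots,P^m)$ is the unique $\boldsymbol\lambda$ with $\sum_i\lambda_i=1$, $Q=\sum_i\lambda_iP^i$. The equidistant point is the unique $Q^0\in L(P^1,\dots,P^m)$ with all $d(P^i,Q^0)$ equal. The smallest enclosing circle has center $Q^\ast$ attaining $\min_Q\max_i d(P^i,Q)$ and radius $d^\ast$ equal to this minimum. *)

theory Defs
  imports "HOL-Analysis.Analysis"
begin

text \<open>Points are a family P :: nat => 'a indexed by 1..m.\<close>

definition general_position :: "(nat \<Rightarrow> 'a::euclidean_space) \<Rightarrow> nat \<Rightarrow> bool" where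
  "general_position P m \<longleftrightarrow>
     (\<forall>c::nat \<Rightarrow> real. (\<Sum>i\<in>{2..m}. c i *\<^sub>R (P i - P 1)) = 0 \<longrightarrow> (\<forall>i\<in>{2..m}. c i = 0))"

definition aff_span :: "(nat \<Rightarrow> 'a::euclidean_space) \<Rightarrow> nat set \<Rightarrow> 'a set" where
  "aff_span P S = affine hull (P ` S)"

definition orth_proj :: "'a::euclidean_space \<Rightarrow> 'a set \<Rightarrow> 'a" where
  "orth_proj Q L = (THE q. q \<in> L \<and> (\<forall>x\<in>L. (Q - q) \<bullet> (x - q) = 0))"

definition bary :: "(nat \<Rightarrow> 'a::euclidean_space) \<Rightarrow> nat \<Rightarrow> 'a \<Rightarrow> (nat \<Rightarrow> real)" where
  "bary P m Q = (THE l. (\<forall>i. i \<notin> {1..m} \<longrightarrow> l i = 0) \<and> (\<Sum>i\<in>{1..m}. l i) = 1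
                       \<and> Q = (\<Sum>i\<in>{1..m}. l i *\<^sub>R P i))"

definition equidistant_point :: "(nat \<Rightarrow> 'a::euclidean_space) \<Rightarrow> nat \<Rightarrow> 'a" where
  "equidistant_point P m = (THE Q. Q \<in> aff_span P {1..m} \<and>
       (\<forall>i\<in>{1..m}. \<forall>j\<in>{1..m}. dist (P i) Q = dist (P j) Q))"

definition max_dist :: "(nat \<Rightarrow> 'a::euclidean_space) \<Rightarrow> nat \<Rightarrow> 'a \<Rightarrow> real" where
  "max_dist P m Q = Max ((\<lambda>i. dist (P i) Q) ` {1..m})"

definition sec_center :: "(nat \<Rightarrow> 'a::euclidean_space) \<Rightarrow> nat \<Rightarrow> 'a" where
  "sec_center P m = (THE Q. \<forall>Q'. max_dist P m Q \<le> max_dist P m Q')"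

definition sec_radius :: "(nat \<Rightarrow> 'a::euclidean_space) \<Rightarrow> nat \<Rightarrow> real" where
  "sec_radius P m = (INF Q. max_dist P m Q)"

end

theory Submission
  imports Defs
begin

text \<open>
  Let \<open>C\<close> be the foot of the perpendicular from the equidistant point \<open>Q\<^sup>0\<close> onto the plane
  of \<open>P\<^sup>2, P\<^sup>3, P\<^sup>4\<close>. By Pythagoras \<open>C\<close> is equidistant from these three points, at distance
  \<open>r\<close> say. Since the coordinate of \<open>Q\<^sup>0\<close> at \<open>P\<^sup>1\<close> is negative, \<open>P\<^sup>1\<close> lies on the far side of
  the hyperplane through \<open>C\<close> orthogonal to \<open>Q\<^sup>0 - C\<close>, hence within distance \<open>r\<close> of \<open>C\<close>.
  Finally \<open>C = \<Sum> w\<^sub>j P\<^sup>j\<close> is a convex combination of points at distance \<open>r\<close>, and the identity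
  \<open>\<Sum> w\<^sub>j d(P\<^sup>j, X)\<^sup>2 = r\<^sup>2 + d(C, X)\<^sup>2\<close> shows that every centre \<open>X \<noteq> C\<close> leaves some point
  farther than \<open>r\<close> away.
\<close>

lemma affine_hull_image_imp_affine_combination:
  fixes P :: "'i \<Rightarrow> 'a::real_vector"
  assumes "finite S" "x \<in> affine hull (P ` S)"
  obtains l where "sum l S = 1" "x = (\<Sum>i\<in>S. l i *\<^sub>R P i)"
proof -
  let ?A = "{x. \<exists>l. sum l S = 1 \<and> x = (\<Sum>i\<in>S. l i *\<^sub>R P i)}"
  have "P ` S \<subseteq> ?A"
  proof clarify
    fix i assume "i \<in> S"
    then show "\<exists>l. sum l S = 1 \<and> P i = (\<Sum>j\<in>S. l j *\<^sub>R P j)"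
    proof (intro exI[of _ "\<lambda>j. if j = i then 1 else 0"] conjI)
      have "(\<Sum>j\<in>S. (if j = i then 1 else 0) *\<^sub>R P j) = (\<Sum>j\<in>S. if j = i then P j else 0)"
        by (intro sum.cong) auto
      then show "P i = (\<Sum>j\<in>S. (if j = i then 1 else 0) *\<^sub>R P j)"
        using \<open>i \<in> S\<close> \<open>finite S\<close> by simp
    qed (use \<open>i \<in> S\<close> \<open>finite S\<close> in simp)
  qed
  moreover have "affine ?A"
    unfolding affine_def
  proof clarify
    fix l1 l2 :: "'i \<Rightarrow> real" and u v :: real
    assume "sum l1 S = 1" "sum l2 S = 1" "u + v = 1"
    then show "\<exists>l. sum l S = 1 \<and> u *\<^sub>R (\<Sum>i\<in>S. l1 i *\<^sub>R P i) + v *\<^sub>R (\<Sum>i\<in>S. l2 i *\<^sub>R P i) = (\<Sum>i\<in>S. l i *\<^sub>R P i)"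
      by (intro exI[of _ "\<lambda>i. u * l1 i + v * l2 i"])
         (simp add: sum.distrib scaleR_sum_right scaleR_add_left flip: sum_distrib_left)
  qed
  ultimately have "affine hull (P ` S) \<subseteq> ?A" by (rule hull_minimal)
  with assms that show ?thesis by blast
qed

lemma general_position_affinely_independent:
  fixes P :: "nat \<Rightarrow> 'a::euclidean_space"
  assumes "general_position P m" "sum c {1..m} = 0" "(\<Sum>i\<in>{1..m}. c i *\<^sub>R P i) = 0"
    and i: "i \<in> {1..m}"
  shows "c i = 0"
proof -
  have sum_split: "sum f {1..m} = f 1 + sum f {2..m}" for f :: "nat \<Rightarrow> 'b::comm_monoid_add"
    using i sum.atLeast_Suc_atMost[of 1 m f] by (simp add: numeral_2_eq_2)
  have "(\<Sum>i\<in>{2..m}. c i *\<^sub>R (P i - P 1)) = (\<Sum>i\<in>{1..m}. c i *\<^sub>R (P i - P 1))"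
    by (subst sum_split) simp
  also have "\<dots> = (\<Sum>i\<in>{1..m}. c i *\<^sub>R P i) - sum c {1..m} *\<^sub>R P 1"
    by (simp add: scaleR_diff_right sum_subtractf scaleR_sum_left)
  finally have "\<forall>i\<in>{2..m}. c i = 0"
    using assms(1-3) unfolding general_position_def by simp
  moreover from this have "c 1 = 0" using assms(2) unfolding sum_split by simp
  ultimately show ?thesis using i by (cases "i = 1") auto
qed

lemma bary_eqI:
  fixes P :: "nat \<Rightarrow> 'a::euclidean_space"
  assumes gp: "general_position P m" and l: "sum l {1..m} = 1" "Q = (\<Sum>i\<in>{1..m}. l i *\<^sub>R P i)"
    and i: "i \<in> {1..m}"
  shows "bary P m Q i = l i"
proof -
  define l' where "l' i = (if i \<in> {1..m} then l i else 0)" for i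
  have "bary P m Q = l'"
    unfolding bary_def
  proof (rule the_equality)
    show "(\<forall>i. i \<notin> {1..m} \<longrightarrow> l' i = 0) \<and> sum l' {1..m} = 1 \<and> Q = (\<Sum>i\<in>{1..m}. l' i *\<^sub>R P i)"
      using l by (simp add: l'_def)
  next
    fix k assume k: "(\<forall>i. i \<notin> {1..m} \<longrightarrow> k i = 0) \<and> sum k {1..m} = 1 \<and> Q = (\<Sum>i\<in>{1..m}. k i *\<^sub>R P i)"
    have "sum (\<lambda>i. k i - l i) {1..m} = 0" "(\<Sum>i\<in>{1..m}. (k i - l i) *\<^sub>R P i) = 0"
      using k l by (simp_all add: sum_subtractf scaleR_diff_left)
    then have "k i = l i" if "i \<in> {1..m}" for i
      using general_position_affinely_independent[OF gp _ _ that, where c = "\<lambda>i. k i - l i"] by simp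
    show "k = l'"
    proof
      fix i show "k i = l' i"
      proof (cases "i \<in> {1..m}")
        case True
        with \<open>\<And>i. i \<in> {1..m} \<Longrightarrow> k i = l i\<close> show ?thesis by (simp add: l'_def)
      next
        case False
        with k have "k i = 0" by blast
        with False show ?thesis unfolding l'_def by (simp only: if_False)
      qed
    qed
  qed
  with i show ?thesis by (simp add: l'_def)
qed

lemma bary_aff_span:
  fixes P :: "nat \<Rightarrow> 'a::euclidean_space"
  assumes gp: "general_position P m" and S: "S \<subseteq> {1..m}" and Q: "Q \<in> aff_span P S"
  shows "sum (bary P m Q) S = 1" "Q = (\<Sum>i\<in>S. bary P m Q i *\<^sub>R P i)"
proof -
  have fin: "finite S" using S finite_subset by blast
  obtain l where l: "sum l S = 1" "Q = (\<Sum>i\<in>S. l i *\<^sub>R P i)"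
    using affine_hull_image_imp_affine_combination[OF fin] Q unfolding aff_span_def by blast
  define l' where "l' i = (if i \<in> S then l i else 0)" for i
  have "sum l' {1..m} = sum l S" "(\<Sum>i\<in>{1..m}. l' i *\<^sub>R P i) = (\<Sum>i\<in>S. l i *\<^sub>R P i)"
    using S by (auto simp: l'_def intro!: sum.mono_neutral_cong_right)
  then have "bary P m Q i = l i" if "i \<in> S" for i
    using bary_eqI[OF gp, of l' Q i] l S that by (auto simp: l'_def)
  then show "sum (bary P m Q) S = 1" "Q = (\<Sum>i\<in>S. bary P m Q i *\<^sub>R P i)"
    using l by simp_all
qed

lemma orth_proj_affine:
  fixes L :: "'a::euclidean_space set"
  assumes "affine L" "L \<noteq> {}"
  shows "orth_proj Q L \<in> L" "\<forall>x\<in>L. (Q - orth_proj Q L) \<bullet> (x - orth_proj Q L) = 0"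
proof -
  obtain a where a: "a \<in> L" using assms(2) by blast
  define V where "V = span ((\<lambda>x. - a + x) ` L)"
  have L: "L = (+) a ` V"
    using affine_hull_span_gen[of a L] a hull_same[of affine L] assms(1) unfolding V_def by simp
  obtain y z where y: "y \<in> V" and z: "\<And>w. w \<in> V \<Longrightarrow> orthogonal z w" and yz: "Q - a = y + z"
    unfolding V_def using orthogonal_subspace_decomp_exists by metis
  define q where "q = a + y"
  have q: "q \<in> L" unfolding L q_def using y by blast
  have orth: "\<forall>x\<in>L. (Q - q) \<bullet> (x - q) = 0"
  proof
    fix x assume "x \<in> L"
    then obtain v where "v \<in> V" "x = a + v" unfolding L by blast
    then have "x - q \<in> V" unfolding q_def V_def using y span_diff[of v _ y] by (simp add: V_def)
    moreover have "Q - q = z" using yz unfolding q_def by (simp add: algebra_simps)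
    ultimately show "(Q - q) \<bullet> (x - q) = 0" using z by (simp add: orthogonal_def)
  qed
  have "orth_proj Q L = q"
    unfolding orth_proj_def
  proof (rule the_equality)
    show "q \<in> L \<and> (\<forall>x\<in>L. (Q - q) \<bullet> (x - q) = 0)" using q orth by blast
  next
    fix q' assume q': "q' \<in> L \<and> (\<forall>x\<in>L. (Q - q') \<bullet> (x - q') = 0)"
    then have "(Q - q) \<bullet> (q' - q) = 0" "(Q - q') \<bullet> (q - q') = 0" using orth q by blast+
    then have "(q' - q) \<bullet> (q' - q) = 0" by (simp add: algebra_simps inner_simps inner_commute)
    then show "q' = q" by simp
  qed
  with q orth show "orth_proj Q L \<in> L" "\<forall>x\<in>L. (Q - orth_proj Q L) \<bullet> (x - orth_proj Q L) = 0"
    by simp_all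
qed

lemma orth_proj_aff_span:
  fixes P :: "nat \<Rightarrow> 'a::euclidean_space"
  assumes "S \<noteq> {}"
  shows "orth_proj Q (aff_span P S) \<in> aff_span P S"
    "\<forall>j\<in>S. (Q - orth_proj Q (aff_span P S)) \<bullet> (P j - orth_proj Q (aff_span P S)) = 0"
proof -
  have "affine (aff_span P S)" "aff_span P S \<noteq> {}"
    using assms unfolding aff_span_def by simp_all
  note L = orth_proj_affine[OF this, of Q]
  show "orth_proj Q (aff_span P S) \<in> aff_span P S" by (rule L(1))
  have "P j \<in> aff_span P S" if "j \<in> S" for j
    unfolding aff_span_def using that by (intro hull_inc) auto
  with L(2) show "\<forall>j\<in>S. (Q - orth_proj Q (aff_span P S)) \<bullet> (P j - orth_proj Q (aff_span P S)) = 0"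
    by blast
qed

lemma dist_eq_iff_inner:
  fixes a b x :: "'a::real_inner"
  shows "dist a x = dist b x \<longleftrightarrow> (x - b) \<bullet> (a - b) = (a - b) \<bullet> (a - b) / 2"
proof -
  have "dist a x = dist b x \<longleftrightarrow> (a - x) \<bullet> (a - x) = (b - x) \<bullet> (b - x)"
    by (simp add: dist_norm norm_eq_sqrt_inner)
  moreover have "(a - x) \<bullet> (a - x) - (b - x) \<bullet> (b - x) = (a - b) \<bullet> (a - b) - 2 * ((x - b) \<bullet> (a - b))"
    by (simp add: inner_diff_left inner_diff_right inner_commute)
  ultimately show ?thesis by auto
qed

lemma general_position_independent:
  fixes P :: "nat \<Rightarrow> 'a::euclidean_space"
  assumes gp: "general_position P m"
  shows "independent ((\<lambda>i. P i - P 1) ` {2..m})"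
proof -
  let ?w = "\<lambda>i. P i - P 1"
  have inj: "inj_on ?w {2..m}"
  proof (rule inj_onI, rule ccontr)
    fix i j assume ij: "i \<in> {2..m}" "j \<in> {2..m}" "?w i = ?w j" "i \<noteq> j"
    define c where "c k = (if k = i then 1 else if k = j then -1 else 0 :: real)" for k
    have "(\<Sum>k\<in>{2..m}. c k *\<^sub>R ?w k) = (\<Sum>k\<in>{2..m}. (if k = i then ?w k else 0) - (if k = j then ?w k else 0))"
      using ij(4) by (intro sum.cong) (auto simp: c_def)
    also have "\<dots> = 0" using ij by (simp add: sum_subtractf)
    finally have "c i = 0" using gp ij(1) unfolding general_position_def by blast
    then show False by (simp add: c_def)
  qed
  show ?thesis
    unfolding independent_explicit
  proof (intro conjI allI impI ballI)
    fix c :: "'a \<Rightarrow> real" and v assume c: "(\<Sum>v\<in>?w ` {2..m}. c v *\<^sub>R v) = 0" and v: "v \<in> ?w ` {2..m}"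
    have "(\<Sum>i\<in>{2..m}. c (?w i) *\<^sub>R ?w i) = 0" using c unfolding sum.reindex[OF inj] comp_def .
    then have "\<forall>i\<in>{2..m}. c (?w i) = 0"
      using gp unfolding general_position_def by (elim allE[of _ "\<lambda>i. c (?w i)"]) simp
    with v show "c v = 0" by blast
  qed simp
qed

lemma aff_span_eq_translated_span:
  fixes P :: "nat \<Rightarrow> 'a::euclidean_space"
  assumes "m \<ge> 1"
  shows "aff_span P {1..m} = (+) (P 1) ` span ((\<lambda>i. P i - P 1) ` {2..m})"
proof -
  have "aff_span P {1..m} = (+) (P 1) ` span ((\<lambda>x. - P 1 + x) ` P ` {1..m})"
    unfolding aff_span_def using assms by (intro affine_hull_span_gen hull_inc) auto
  also have "(\<lambda>x. - P 1 + x) ` P ` {1..m} = insert 0 ((\<lambda>i. P i - P 1) ` {2..m})"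
  proof -
    have "{1..m} = insert 1 {2..m}" using assms by auto
    moreover have "(\<lambda>x. - P 1 + x) ` P ` {2..m} = (\<lambda>i. P i - P 1) ` {2..m}"
      unfolding image_image by (simp add: algebra_simps)
    ultimately show ?thesis by simp
  qed
  finally show ?thesis by (simp only: span_insert_0)
qed

lemma span_vector_with_inner_values:
  fixes W :: "'a::euclidean_space set"
  assumes "independent W"
  obtains y where "y \<in> span W" "\<forall>w\<in>W. y \<bullet> w = f w"
proof -
  obtain g :: "'a \<Rightarrow> real" where g: "linear g" "\<forall>w\<in>W. g w = f w"
    using real_vector.linear_independent_extend[OF assms, where f = f] by auto
  obtain y z where y: "y \<in> span W" and z: "\<And>w. w \<in> span W \<Longrightarrow> orthogonal z w"
    and yz: "adjoint g 1 = y + z"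
    using orthogonal_subspace_decomp_exists by metis
  have "y \<bullet> w = f w" if w: "w \<in> W" for w
  proof -
    have "z \<bullet> w = 0" using z[OF span_base[OF w]] by (simp add: orthogonal_def)
    then have "y \<bullet> w = adjoint g 1 \<bullet> w" by (simp add: yz inner_add_left)
    also have "\<dots> = g w" using adjoint_works[OF g(1), of w 1] by (simp add: inner_commute)
    finally show ?thesis using g(2) w by simp
  qed
  with y that show ?thesis by blast
qed

lemma equidistant_iff_inner:
  fixes P :: "nat \<Rightarrow> 'a::real_inner"
  assumes m: "m \<ge> 1"
  shows "(\<forall>i\<in>{1..m}. \<forall>j\<in>{1..m}. dist (P i) x = dist (P j) x)
      \<longleftrightarrow> (\<forall>i\<in>{2..m}. (x - P 1) \<bullet> (P i - P 1) = (P i - P 1) \<bullet> (P i - P 1) / 2)" (is "?L \<longleftrightarrow> ?R")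
proof
  assume ?L
  then have "dist (P i) x = dist (P 1) x" if "i \<in> {2..m}" for i
    using m that by simp
  then show ?R by (simp add: dist_eq_iff_inner)
next
  assume ?R
  have "dist (P i) x = dist (P 1) x" if "i \<in> {1..m}" for i
  proof (cases "i = 1")
    case False
    with that have "i \<in> {2..m}" by auto
    with \<open>?R\<close> show ?thesis unfolding dist_eq_iff_inner by blast
  qed simp
  then show ?L by (metis (no_types))
qed

lemma equidistant_point:
  fixes P :: "nat \<Rightarrow> 'a::euclidean_space"
  assumes gp: "general_position P m" and m: "m \<ge> 1"
  shows "equidistant_point P m \<in> aff_span P {1..m}"
    "\<forall>i\<in>{1..m}. dist (P i) (equidistant_point P m) = dist (P 1) (equidistant_point P m)"
proof -
  define W where "W = (\<lambda>i. P i - P 1) ` {2..m}"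
  have A: "aff_span P {1..m} = (+) (P 1) ` span W"
    unfolding W_def by (rule aff_span_eq_translated_span[OF m])
  note equi_iff = equidistant_iff_inner[OF m, of P]
  obtain y where y: "y \<in> span W" "\<forall>w\<in>W. y \<bullet> w = w \<bullet> w / 2"
    by (rule span_vector_with_inner_values[OF general_position_independent[OF gp, folded W_def]])
  define Q where "Q = P 1 + y"
  have Q: "Q \<in> aff_span P {1..m}" unfolding A Q_def using y(1) by blast
  have Q_equi: "\<forall>i\<in>{1..m}. \<forall>j\<in>{1..m}. dist (P i) Q = dist (P j) Q"
    unfolding equi_iff Q_def using y(2) unfolding W_def by simp
  have eq: "equidistant_point P m = Q"
    unfolding equidistant_point_def
  proof (rule the_equality)
    fix Q' assume Q': "Q' \<in> aff_span P {1..m} \<and> (\<forall>i\<in>{1..m}. \<forall>j\<in>{1..m}. dist (P i) Q' = dist (P j) Q')"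
    obtain s where s: "s \<in> span W" "Q' = P 1 + s" using Q' unfolding A by blast
    have "Q' - Q = s - y" by (simp add: s(2) Q_def)
    then have "Q' - Q \<in> span W" using s(1) y(1) by (simp add: span_diff)
    moreover have "orthogonal (Q' - Q) w" if "w \<in> W" for w
    proof -
      obtain i where i: "i \<in> {2..m}" "w = P i - P 1" using \<open>w \<in> W\<close> unfolding W_def by blast
      have "(Q' - P 1) \<bullet> (P i - P 1) = (P i - P 1) \<bullet> (P i - P 1) / 2"
        "(Q - P 1) \<bullet> (P i - P 1) = (P i - P 1) \<bullet> (P i - P 1) / 2"
        using Q' Q_equi i(1) unfolding equi_iff by blast+
      then have "(Q' - P 1) \<bullet> w = (Q - P 1) \<bullet> w" using i(2) by simp
      then show ?thesis by (simp add: orthogonal_def inner_diff_left)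
    qed
    ultimately have "orthogonal (Q' - Q) (Q' - Q)" by (rule orthogonal_to_span)
    then show "Q' = Q" by (simp add: orthogonal_self)
  next
    show "Q \<in> aff_span P {1..m} \<and> (\<forall>i\<in>{1..m}. \<forall>j\<in>{1..m}. dist (P i) Q = dist (P j) Q)"
      using Q Q_equi by (rule conjI)
  qed
  have "dist (P i) Q = dist (P 1) Q" if "i \<in> {1..m}" for i
    using Q_equi that m by (meson atLeastAtMost_iff order_refl)
  with Q show "equidistant_point P m \<in> aff_span P {1..m}"
    "\<forall>i\<in>{1..m}. dist (P i) (equidistant_point P m) = dist (P 1) (equidistant_point P m)"
    unfolding eq by blast+
qed

lemma dist_power2_shift:
  fixes y C X :: "'a::real_inner"
  shows "(dist y C)\<^sup>2 = (dist y X)\<^sup>2 + 2 * ((X - C) \<bullet> (y - C)) - (dist C X)\<^sup>2"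
proof -
  have "(a + b) \<bullet> (a + b) = a \<bullet> a + 2 * (b \<bullet> a) + b \<bullet> b" for a b :: 'a
    by (simp add: inner_add_left inner_add_right inner_commute)
  from this[of "y - C" "C - X"] show ?thesis
    by (simp add: dist_norm power2_norm_eq_inner inner_diff_left)
qed

lemma inner_le_zero_of_negative_coefficient:
  fixes P :: "'i \<Rightarrow> 'a::real_inner"
  assumes l: "sum l I = 1" "Q = (\<Sum>i\<in>I. l i *\<^sub>R P i)" and k: "k \<in> I" "l k < 0"
    and perp: "\<forall>i\<in>I - {k}. (Q - C) \<bullet> (P i - C) = 0"
  shows "(Q - C) \<bullet> (P k - C) \<le> 0"
proof -
  have fin: "finite I" using l(1) by (metis sum.infinite zero_neq_one)
  have "(\<Sum>i\<in>I. l i *\<^sub>R C) = C" using l(1) by (simp flip: scaleR_sum_left)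
  then have "Q - C = (\<Sum>i\<in>I. l i *\<^sub>R (P i - C))"
    using l(2) by (simp add: scaleR_diff_right sum_subtractf)
  then have "(Q - C) \<bullet> (Q - C) = (\<Sum>i\<in>I. l i * ((Q - C) \<bullet> (P i - C)))"
    by (metis (no_types, lifting) inner_scaleR_right inner_sum_right sum.cong)
  also have "\<dots> = l k * ((Q - C) \<bullet> (P k - C))"
    using perp by (simp add: sum.remove[OF fin k(1)])
  finally have "0 \<le> l k * ((Q - C) \<bullet> (P k - C))" by (metis inner_ge_zero)
  with k(2) show ?thesis by (simp add: zero_le_mult_iff)
qed

lemma dist_foot_of_perpendicular:
  fixes P :: "'i \<Rightarrow> 'a::real_inner"
  assumes J: "J \<subseteq> I" "j \<in> J" and Q: "\<forall>i\<in>I. dist (P i) Q = R"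
    and perp: "\<forall>i\<in>J. (Q - C) \<bullet> (P i - C) = 0" and far: "\<forall>i\<in>I - J. (Q - C) \<bullet> (P i - C) \<le> 0"
  shows "\<forall>i\<in>J. dist (P i) C = dist (P j) C" "\<forall>i\<in>I. dist (P i) C \<le> dist (P j) C"
proof -
  have d: "(dist (P i) C)\<^sup>2 = R\<^sup>2 + 2 * ((Q - C) \<bullet> (P i - C)) - (dist C Q)\<^sup>2" if "i \<in> I" for i
  proof -
    have "dist (P i) Q = R" using Q that by blast
    with dist_power2_shift[of "P i" C Q] show ?thesis by (simp only:)
  qed
  have "j \<in> I" using J by blast
  have eq: "(dist (P i) C)\<^sup>2 = (dist (P j) C)\<^sup>2" if "i \<in> J" for i
    using d[of i] d[OF \<open>j \<in> I\<close>] perp that J by auto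
  show "\<forall>i\<in>J. dist (P i) C = dist (P j) C"
    using power2_eq_imp_eq[OF eq] by simp
  have le: "(dist (P i) C)\<^sup>2 \<le> (dist (P j) C)\<^sup>2" if "i \<in> I" for i
    using d[OF that] d[OF \<open>j \<in> I\<close>] perp far that J by (cases "i \<in> J") auto
  show "\<forall>i\<in>I. dist (P i) C \<le> dist (P j) C"
    using power2_le_imp_le[OF le] by simp
qed

lemma sum_weighted_dist_power2:
  fixes P :: "'i \<Rightarrow> 'a::real_inner"
  assumes w: "sum w J = 1" and C: "C = (\<Sum>j\<in>J. w j *\<^sub>R P j)"
  shows "(\<Sum>j\<in>J. w j * (dist (P j) X)\<^sup>2) = (\<Sum>j\<in>J. w j * (dist (P j) C)\<^sup>2) + (dist C X)\<^sup>2"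
proof -
  have "(\<Sum>j\<in>J. w j *\<^sub>R (P j - C)) = C - sum w J *\<^sub>R C"
    by (simp add: C scaleR_diff_right sum_subtractf scaleR_sum_left)
  with w have "(\<Sum>j\<in>J. w j *\<^sub>R (P j - C)) = 0" by simp
  then have cross: "(\<Sum>j\<in>J. w j * ((X - C) \<bullet> (P j - C))) = 0"
    by (metis (no_types, lifting) inner_scaleR_right inner_sum_right inner_zero_right sum.cong)
  have "(\<Sum>j\<in>J. w j * (dist (P j) X)\<^sup>2)
      = (\<Sum>j\<in>J. w j * (dist (P j) C)\<^sup>2 - 2 * (w j * ((X - C) \<bullet> (P j - C))) + w j * (dist C X)\<^sup>2)"
    by (intro sum.cong refl) (simp add: dist_power2_shift[of "P _" C X] algebra_simps)
  also have "\<dots> = (\<Sum>j\<in>J. w j * (dist (P j) C)\<^sup>2) + (dist C X)\<^sup>2"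
    using cross w by (simp add: sum.distrib sum_subtractf flip: sum_distrib_left sum_distrib_right)
  finally show ?thesis .
qed

lemma max_dist_ge:
  fixes P :: "nat \<Rightarrow> 'a::euclidean_space"
  shows "i \<in> {1..m} \<Longrightarrow> dist (P i) X \<le> max_dist P m X"
  unfolding max_dist_def by (rule Max_ge) auto

lemma sec_center_radius_certificate:
  fixes P :: "nat \<Rightarrow> 'a::euclidean_space"
  assumes J: "J \<subseteq> {1..m}" and w: "\<forall>j\<in>J. 0 \<le> w j" "sum w J = 1" and C: "C = (\<Sum>j\<in>J. w j *\<^sub>R P j)"
    and sphere: "\<forall>j\<in>J. dist (P j) C = r" and ball: "\<forall>i\<in>{1..m}. dist (P i) C \<le> r"
  shows "sec_center P m = C" "sec_radius P m = r"
proof -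
  obtain j0 where j0: "j0 \<in> J" using w(2) by fastforce
  have max_C: "max_dist P m C = r"
    unfolding max_dist_def using J j0 sphere ball by (intro Max_eqI) force+
  have M: "0 \<le> max_dist P m X" for X
    using max_dist_ge[of j0 m P X] J j0 zero_le_dist[of "P j0" X] by (meson order_trans subsetD)
  have lower: "r\<^sup>2 + (dist C X)\<^sup>2 \<le> (max_dist P m X)\<^sup>2" for X
  proof -
    have "r\<^sup>2 + (dist C X)\<^sup>2 = (\<Sum>j\<in>J. w j * (dist (P j) C)\<^sup>2) + (dist C X)\<^sup>2"
      using sphere w(2) by (simp flip: sum_distrib_right)
    also have "\<dots> = (\<Sum>j\<in>J. w j * (dist (P j) X)\<^sup>2)"
      by (rule sum_weighted_dist_power2[OF w(2) C, symmetric])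
    also have "\<dots> \<le> (\<Sum>j\<in>J. w j * (max_dist P m X)\<^sup>2)"
      using J w(1) max_dist_ge[of _ m P X]
      by (intro sum_mono mult_left_mono power_mono) auto
    also have "\<dots> = (max_dist P m X)\<^sup>2" using w(2) by (simp flip: sum_distrib_right)
    finally show ?thesis .
  qed
  have min: "r \<le> max_dist P m X" for X
  proof (rule power2_le_imp_le)
    show "r\<^sup>2 \<le> (max_dist P m X)\<^sup>2" using lower[of X] zero_le_power2[of "dist C X"] by linarith
  qed (rule M)
  show "sec_center P m = C"
    unfolding sec_center_def
  proof (rule the_equality)
    fix X assume "\<forall>Q'. max_dist P m X \<le> max_dist P m Q'"
    then have "(max_dist P m X)\<^sup>2 \<le> r\<^sup>2" using max_C M[of X] by (metis power_mono)
    with lower[of X] have "(dist C X)\<^sup>2 \<le> 0" by linarith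
    then show "X = C" by simp
  qed (use max_C min in simp)
  have bdd: "bdd_below (range (max_dist P m))" using M by (intro bdd_belowI) auto
  show "sec_radius P m = r"
    unfolding sec_radius_def
  proof (rule antisym)
    show "(INF Q. max_dist P m Q) \<le> r" using cINF_lower[OF bdd, of C] max_C by simp
    show "r \<le> (INF Q. max_dist P m Q)" using min by (intro cINF_greatest) auto
  qed
qed

theorem theorem9:
  fixes P :: "nat \<Rightarrow> 'a::euclidean_space"
  assumes gp: "general_position P 4"
    and l0: "bary P 4 (equidistant_point P 4) 1 < 0"
            "bary P 4 (equidistant_point P 4) 2 < 0"
            "bary P 4 (equidistant_point P 4) 3 \<ge> 0"
            "bary P 4 (equidistant_point P 4) 4 \<ge> 0"
    and l12: "bary P 4 (orth_proj (equidistant_point P 4) (aff_span P {1,3,4})) 1 < 0"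
    and l11: "bary P 4 (orth_proj (equidistant_point P 4) (aff_span P {2,3,4})) 2 \<ge> 0"
             "bary P 4 (orth_proj (equidistant_point P 4) (aff_span P {2,3,4})) 3 \<ge> 0"
             "bary P 4 (orth_proj (equidistant_point P 4) (aff_span P {2,3,4})) 4 \<ge> 0"
  shows "sec_center P 4 = orth_proj (equidistant_point P 4) (aff_span P {2,3,4})
         \<and> sec_radius P 4 = dist (P 2) (orth_proj (equidistant_point P 4) (aff_span P {2,3,4}))"
proof -
  define Q0 C where "Q0 = equidistant_point P 4" and "C = orth_proj Q0 (aff_span P {2,3,4})"
  have faces: "(1::nat) \<le> 4" "{2,3,4} \<subseteq> {1..4::nat}"
    "{1..4} - {1} = {2,3,4::nat}" "{1..4} - {2,3,4} = {1::nat}" by auto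
  note Q0 = equidistant_point[OF gp faces(1), folded Q0_def]
  note C = orth_proj_aff_span[where S = "{2,3,4}" and Q = Q0 and P = P, OF insert_not_empty, folded C_def]
  note Q0_comb = bary_aff_span[OF gp order_refl Q0(1)]
  have "(Q0 - C) \<bullet> (P 1 - C) \<le> 0"
    using inner_le_zero_of_negative_coefficient[OF Q0_comb, of 1 C] l0(1) C(2)
    unfolding faces(3) Q0_def by simp
  then have far: "\<forall>i\<in>{1..4} - {2,3,4}. (Q0 - C) \<bullet> (P i - C) \<le> 0" unfolding faces(4) by simp
  have foot: "\<forall>j\<in>{2,3,4}. dist (P j) C = dist (P 2) C" "\<forall>i\<in>{1..4}. dist (P i) C \<le> dist (P 2) C"
    by (rule dist_foot_of_perpendicular[OF faces(2) _ Q0(2) C(2) far]; simp)+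
  have "\<forall>j\<in>{2,3,4}. 0 \<le> bary P 4 C j" using l11 unfolding C_def Q0_def by simp
  from sec_center_radius_certificate[OF faces(2) this bary_aff_span[OF gp faces(2) C(1)] foot]
  have "sec_center P 4 = C" "sec_radius P 4 = dist (P 2) C" .
  then show ?thesis unfolding C_def Q0_def by simp
qed


end
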